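(* Let $K$ be a virtual knot. Write $$F_K(t,s)=\sum_{[g]\neq[0]} a_{[g]}\,t^{[g]}+b\,t^{[0]},$$ with $a_{[g]},b\in\mathbb{Z}$, where the sum runs over equivalence classes different from the class of $0$. Then $$c_r(K)\ge\sum_{[g]\ne[0]}|a_{[g]}|.$$
   Context: The real crossing number $c_r(K)$ of a virtual knot $K$ is the minimum number of real crossings over all virtual knot diagrams representing $K$. The Gauss diagram of an oriented virtual knot diagram is built as follows. Take a counterclockwise-oriented circle. For each real crossing, join its two preimages by a chord directed from over- to undercrossing, labeled with the writhe $w(c)=\pm1$. Put $w(K)=\sum_c w(c)$. Let $d$ be a chord intersecting a chord $c$ (endpoints interleave). We say $d$ crosses $c$ from left to right if, viewing $c$ along its direction, the tail of $d$ lies on the left and its head on the right; right to left is the opposite. Let $r_1,\dots,r_n$ be the chords crossing $c$ from left to right and $l_1,\dots,l_m$ those crossing from right to left. Then $\mathrm{Ind}(c)=\sum_i w(r_i)-\sum_j w(l_j)$. Put $N=|\mathrm{Ind}(c)|$ and let $\phi$ be reduction mod $N$ into $\{0,\dots,N-1\}$ if $N\ge1$, and the identity if $N=0$. Define $$g_c(s)=\sum_i w(r_i)s^{\phi(\mathrm{Ind}(r_i))}-\sum_j w(l_j)s^{\phi(-\mathrm{Ind}(l_j))}.$$ Call Laurent polynomials $p,q\in\mathbb{Z}[s,s^{-1}]$ equivalent if $p(1)=q(1)$ and $p\equiv q\pmod{s^{|p(1)|}-1}$. Note that the class of $0$ is $\{0\}$. Write $t^{[p]}$ for the corresponding basis element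 of the free abelian group on equivalence classes. Then $$F_K(t,s)=\sum_c w(c)\,t^{[g_c(s)]}-w(K)\,t^{[0]},$$ summing over all real crossings of a diagram of $K$. This element does not depend on the chosen diagram of $K$. *)

theory Defs
  imports Main
begin

text \<open>A Gauss diagram is encoded by the cyclic sequence of chord endpoints met when
traversing the counterclockwise-oriented circle (starting at an arbitrary point).
An endpoint is a triple (label, is_tail, positive): is_tail = True means the endpoint is
the preimage of the overcrossing (tail of the chord), positive = True means writhe +1.\<close>

type_synonym endpt = "nat \<times> bool \<times> bool"
type_synonym gdiag = "endpt list"

definition gd_wf :: "gdiag \<Rightarrow> bool" where
  "gd_wf D \<longleftrightarrow> distinct (map (\<lambda>(l,t,s). (l,t)) D) \<and>
     (\<forall>l t s. (l,t,s) \<in> set D \<longrightarrow> (\<exists>s'. (l,True,s') \<in> set D \<and> (l,False,s') \<in> set D))"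

definition chords :: "gdiag \<Rightarrow> nat set" where
  "chords D = {l. \<exists>t s. (l,t,s) \<in> set D}"

definition wr :: "gdiag \<Rightarrow> nat \<Rightarrow> int" where
  "wr D c = (if (c,True,True) \<in> set D then 1 else -1)"

definition writhe :: "gdiag \<Rightarrow> int" where
  "writhe D = (\<Sum>c\<in>chords D. wr D c)"

definition pos :: "gdiag \<Rightarrow> nat \<Rightarrow> bool \<Rightarrow> nat" where
  "pos D l t = (THE i. i < length D \<and> fst (D!i) = l \<and> fst (snd (D!i)) = t)"

definition between :: "gdiag \<Rightarrow> nat \<Rightarrow> nat \<Rightarrow> bool" where
  "between D c k \<longleftrightarrow> min (pos D c True) (pos D c False) < k \<and> k < max (pos D c True) (pos D c False)"

text \<open>Position k lies on the right of chord c (viewed along its direction, tail to head).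
The counterclockwise arc from the tail to the head lies on the right.\<close>
definition on_right :: "gdiag \<Rightarrow> nat \<Rightarrow> nat \<Rightarrow> bool" where
  "on_right D c k \<longleftrightarrow> (between D c k \<longleftrightarrow> pos D c True < pos D c False)"

definition crosses_LR :: "gdiag \<Rightarrow> nat \<Rightarrow> nat \<Rightarrow> bool" where
  "crosses_LR D c d \<longleftrightarrow> d \<in> chords D \<and> d \<noteq> c \<and>
     \<not> on_right D c (pos D d True) \<and> on_right D c (pos D d False)"

definition crosses_RL :: "gdiag \<Rightarrow> nat \<Rightarrow> nat \<Rightarrow> bool" where
  "crosses_RL D c d \<longleftrightarrow> d \<in> chords D \<and> d \<noteq> c \<and>
     on_right D c (pos D d True) \<and> \<not> on_right D c (pos D d False)"

definition Ind :: "gdiag \<Rightarrow> nat \<Rightarrow> int" where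
  "Ind D c = (\<Sum>d\<in>{d. crosses_LR D c d}. wr D d) - (\<Sum>d\<in>{d. crosses_RL D c d}. wr D d)"

definition phi :: "int \<Rightarrow> int \<Rightarrow> int" where
  "phi N x = (if N \<ge> 1 then x mod N else x)"

section \<open>Laurent polynomials in s, as finitely supported coefficient functions\<close>

type_synonym lpoly = "int \<Rightarrow> int"

definition lfin :: "lpoly \<Rightarrow> bool" where
  "lfin p \<longleftrightarrow> finite {k. p k \<noteq> 0}"

definition lzero :: lpoly where "lzero = (\<lambda>_. 0)"

definition lev1 :: "lpoly \<Rightarrow> int" where
  "lev1 p = (\<Sum>k\<in>{k. p k \<noteq> 0}. p k)"

text \<open>p equivalent to q: p(1)=q(1) and (s^n - 1) divides p - q in Z[s,s^-1], n = |p(1)|.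
The coefficient of s^k in (s^n - 1) h is h(k-n) - h(k).\<close>
definition lp_equiv :: "lpoly \<Rightarrow> lpoly \<Rightarrow> bool" where
  "lp_equiv p q \<longleftrightarrow> lev1 p = lev1 q \<and>
     (\<exists>h. lfin h \<and> (\<forall>k. p k - q k = h (k - \<bar>lev1 p\<bar>) - h k))"

definition lcls :: "lpoly \<Rightarrow> lpoly set" where
  "lcls p = {q. lfin q \<and> lp_equiv p q}"

definition gpoly :: "gdiag \<Rightarrow> nat \<Rightarrow> lpoly" where
  "gpoly D c = (\<lambda>k.
     (\<Sum>d\<in>{d. crosses_LR D c d \<and> phi \<bar>Ind D c\<bar> (Ind D d) = k}. wr D d)
   - (\<Sum>d\<in>{d. crosses_RL D c d \<and> phi \<bar>Ind D c\<bar> (- Ind D d) = k}. wr D d))"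

text \<open>F_K as an element of the free abelian group on classes: coefficient of t^C.\<close>
definition F_coef :: "gdiag \<Rightarrow> lpoly set \<Rightarrow> int" where
  "F_coef D C = (\<Sum>c\<in>{c\<in>chords D. lcls (gpoly D c) = C}. wr D c)
              - (if C = lcls lzero then writhe D else 0)"

definition F_classes :: "gdiag \<Rightarrow> lpoly set set" where
  "F_classes D = (\<lambda>c. lcls (gpoly D c)) ` chords D"

definition omega3_ok :: "endpt \<times> endpt \<Rightarrow> endpt \<times> endpt \<Rightarrow> endpt \<times> endpt \<Rightarrow> bool" where
  "omega3_ok P1 P2 P3 \<longleftrightarrow> (\<exists>T M B a b c sa sb sc e1 e2 e3.
     (T,M,B) \<in> {(P1,P2,P3),(P1,P3,P2),(P2,P1,P3),(P2,P3,P1),(P3,P1,P2),(P3,P2,P1)} \<and>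
     a \<noteq> b \<and> a \<noteq> c \<and> b \<noteq> c \<and>
     T = (if e1 then ((a,True,sa),(b,True,sb)) else ((b,True,sb),(a,True,sa))) \<and>
     M = (if e2 then ((a,False,sa),(c,True,sc)) else ((c,True,sc),(a,False,sa))) \<and>
     B = (if e3 then ((b,False,sb),(c,False,sc)) else ((c,False,sc),(b,False,sb))) \<and>
     ((e1 = e2) = (sb = sc)) \<and> ((e2 = e3) = (sa = sb)))"

inductive gd_move :: "gdiag \<Rightarrow> gdiag \<Rightarrow> bool" where
  rot: "gd_move D (rotate1 D)"
| ren: "inj_on f (chords D) \<Longrightarrow> gd_move D (map (\<lambda>(l,t,s). (f l, t, s)) D)"
| om1: "l \<notin> chords (u @ v) \<Longrightarrow>
        gd_move (u @ v) (u @ [(l,t,s),(l,\<not>t,s)] @ v)"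
| om2: "a \<notin> chords (u @ v @ x) \<Longrightarrow> b \<notin> chords (u @ v @ x) \<Longrightarrow> a \<noteq> b \<Longrightarrow> sb = (\<not> sa) \<Longrightarrow>
        {p1,p2} = {(a,t,sa),(b,t,sb)} \<Longrightarrow> {q1,q2} = {(a,\<not>t,sa),(b,\<not>t,sb)} \<Longrightarrow>
        gd_move (u @ v @ x) (u @ [p1,p2] @ v @ [q1,q2] @ x)"
| om3: "omega3_ok (x1,y1) (x2,y2) (x3,y3) \<Longrightarrow>
        gd_move (u @ [x1,y1] @ v @ [x2,y2] @ w @ [x3,y3] @ z)
                (u @ [y1,x1] @ v @ [y2,x2] @ w @ [y3,x3] @ z)"

definition gd_equiv :: "gdiag \<Rightarrow> gdiag \<Rightarrow> bool" where
  "gd_equiv = (\<lambda>D E. gd_wf D \<and> gd_wf E \<and> (gd_move D E \<or> gd_move E D))\<^sup>*\<^sup>*"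

definition virtual_knot :: "gdiag \<Rightarrow> gdiag set" where
  "virtual_knot D = {E. gd_wf E \<and> gd_equiv D E}"

definition real_crossing_number :: "gdiag set \<Rightarrow> nat" where
  "real_crossing_number K = (LEAST n. \<exists>D\<in>K. card (chords D) = n)"

end

theory Submission
  imports Defs
begin

text \<open>F_K is an invariant: every move generating gd_equiv (rotation of the base point,
relabelling, \<Omega>1, \<Omega>2, \<Omega>3) leaves each coefficient unchanged. So F_K may be computed on a
diagram with c_r(K) chords, where each chord c contributes \<plusminus>1 to the coefficient of the class of
g_c alone; the absolute values of the coefficients of the nonzero classes therefore add up to at
most the number of chords.\<close>

lemma finite_chords: "finite (chords D)"
proof -
  have "chords D \<subseteq> fst ` set D" by (force simp: chords_def)
  thus ?thesis by (rule finite_subset) simp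
qed

lemma chordsI: "(l,t,s) \<in> set D \<Longrightarrow> l \<in> chords D"
  unfolding chords_def by blast

lemma pos_eqI:
  assumes D: "gd_wf D" and "i < length D" "fst (D!i) = l" "fst (snd (D!i)) = t"
  shows "pos D l t = i"
  unfolding pos_def
proof (rule the_equality)
  show "i < length D \<and> fst (D!i) = l \<and> fst (snd (D!i)) = t" using assms by simp
next
  let ?key = "\<lambda>(l::nat,t::bool,s::bool). (l,t)"
  fix j assume j: "j < length D \<and> fst (D!j) = l \<and> fst (snd (D!j)) = t"
  hence "map ?key D ! j = map ?key D ! i" using assms by (simp add: case_prod_beta)
  moreover have "distinct (map ?key D)" using D by (simp add: gd_wf_def)
  ultimately show "j = i" using j assms(2) nth_eq_iff_index_eq by fastforce
qed

lemma chord_endpoint_in_set: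
  assumes "gd_wf D" "c \<in> chords D"
  shows "\<exists>s. (c,t,s) \<in> set D"
proof -
  obtain t0 s where "(c,t0,s) \<in> set D" using assms(2) by (auto simp: chords_def)
  then obtain s' where "(c,True,s') \<in> set D" "(c,False,s') \<in> set D"
    using assms(1) unfolding gd_wf_def by blast
  thus ?thesis by (cases t) auto
qed

lemma pos_nth:
  assumes "gd_wf D" "c \<in> chords D"
  shows "pos D c t < length D" "fst (D ! pos D c t) = c" "fst (snd (D ! pos D c t)) = t"
proof -
  obtain s where "(c,t,s) \<in> set D" using chord_endpoint_in_set[OF assms] by blast
  then obtain i where i: "i < length D" "D!i = (c,t,s)" by (auto simp: in_set_conv_nth)
  hence "pos D c t = i" using pos_eqI[OF assms(1)] by simp
  thus "pos D c t < length D" "fst (D ! pos D c t) = c" "fst (snd (D ! pos D c t)) = t"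
    using i by simp_all
qed

lemma pos_inj:
  assumes "gd_wf D" "c \<in> chords D" "d \<in> chords D" "pos D c t = pos D d t'"
  shows "c = d \<and> t = t'"
  using pos_nth[OF assms(1,2), of t] pos_nth[OF assms(1,3), of t'] assms(4) by metis

lemma pos_transfer:
  assumes D: "gd_wf D" and E: "gd_wf E" and c: "c \<in> chords D"
    and \<sigma>: "\<And>i. i < length D \<Longrightarrow> \<sigma> i < length E \<and> E ! \<sigma> i = D ! i"
  shows "pos E c t = \<sigma> (pos D c t)"
  using pos_eqI[OF E, of "\<sigma> (pos D c t)"] \<sigma>[OF pos_nth(1)[OF D c]] pos_nth[OF D c] by simp

lemma wr_eq_if_tail:
  assumes D: "gd_wf D" and tail: "(c,True,s) \<in> set D"
  shows "wr D c = (if s then 1 else -1)"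
proof -
  have inj: "inj_on (\<lambda>(l::nat,t::bool,s::bool). (l,t)) (set D)"
    using D by (simp add: gd_wf_def distinct_map)
  have "(c,True,True) = (c,True,s)" if "(c,True,True) \<in> set D"
    using inj_onD[OF inj _ that tail] by simp
  thus ?thesis using tail by (cases s) (auto simp: wr_def)
qed

section \<open>Crossing signs in terms of the cyclic order\<close>

text \<open>k lies on the arc that runs from p to q in the direction of increasing indices,
wrapping around the end of the list.\<close>
definition cyc_between :: "nat \<Rightarrow> nat \<Rightarrow> nat \<Rightarrow> bool" where
  "cyc_between p k q \<longleftrightarrow> (p < k \<and> k < q) \<or> (q < p \<and> p < k) \<or> (k < q \<and> q < p)"

text \<open>The sign with which a chord with tail at r and head at s crosses a chord with
tail at p and head at q.\<close>
definition cyc_cross :: "nat \<Rightarrow> nat \<Rightarrow> nat \<Rightarrow> nat \<Rightarrow> int" where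
  "cyc_cross p q r s = of_bool (cyc_between p s q) - of_bool (cyc_between p r q)"

definition cross_sign :: "gdiag \<Rightarrow> nat \<Rightarrow> nat \<Rightarrow> int" where
  "cross_sign D c d = (if crosses_LR D c d then 1 else if crosses_RL D c d then -1 else 0)"

lemma cyc_between_mono:
  "strict_mono \<sigma> \<Longrightarrow> cyc_between (\<sigma> p) (\<sigma> k) (\<sigma> q) = cyc_between p k q"
  unfolding cyc_between_def by (simp add: strict_mono_less)

lemma cyc_cross_mono:
  "strict_mono \<sigma> \<Longrightarrow> cyc_cross (\<sigma> p) (\<sigma> q) (\<sigma> r) (\<sigma> s) = cyc_cross p q r s"
  unfolding cyc_cross_def by (simp add: cyc_between_mono)

lemma cyc_cross_antisym:
  assumes "distinct [p,q,r,s]"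
  shows "cyc_cross r s p q = - cyc_cross p q r s"
proof -
  have "p < q \<or> q < p" "p < r \<or> r < p" "p < s \<or> s < p" "q < r \<or> r < q" "q < s \<or> s < q" "r < s \<or> s < r"
    using assms by auto
  hence "of_bool (cyc_between p s q) - of_bool (cyc_between p r q)
       = - (of_bool (cyc_between r q s) - of_bool (cyc_between r p s) :: int)"
    unfolding cyc_between_def by (elim disjE) (simp_all, linarith?)
  thus ?thesis by (simp add: cyc_cross_def)
qed

lemma on_right_cyc_between:
  assumes "gd_wf D" "c \<in> chords D" "k \<noteq> pos D c True" "k \<noteq> pos D c False"
  shows "on_right D c k = cyc_between (pos D c True) k (pos D c False)"
proof -
  have "pos D c True \<noteq> pos D c False" using pos_inj[OF assms(1,2,2)] by blast
  thus ?thesis using assms(3,4) unfolding on_right_def between_def cyc_between_def by auto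
qed

lemma cross_sign_cyc_cross:
  assumes D: "gd_wf D" and "c \<in> chords D" "d \<in> chords D" "c \<noteq> d"
  shows "cross_sign D c d = cyc_cross (pos D c True) (pos D c False) (pos D d True) (pos D d False)"
proof -
  have ne: "pos D d t \<noteq> pos D c t'" for t t' using pos_inj[OF D assms(3,2)] assms(4) by blast
  show ?thesis unfolding cross_sign_def crosses_LR_def crosses_RL_def cyc_cross_def
    using on_right_cyc_between[OF D assms(2) ne ne] assms by auto
qed

lemma cross_sign_self [simp]: "cross_sign D c c = 0"
  by (simp add: cross_sign_def crosses_LR_def crosses_RL_def)

lemma cross_sign_range: "cross_sign D c d \<in> {-1,0,1}"
  by (simp add: cross_sign_def)

definition skew_on :: "nat set \<Rightarrow> (nat \<Rightarrow> nat \<Rightarrow> int) \<Rightarrow> bool" where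
  "skew_on A X \<longleftrightarrow> (\<forall>c\<in>A. \<forall>d\<in>A. X d c = - X c d)"

lemma skew_onD: "skew_on A X \<Longrightarrow> c \<in> A \<Longrightarrow> d \<in> A \<Longrightarrow> X d c = - X c d"
  unfolding skew_on_def by blast

lemma skew_on_diag:
  assumes "skew_on A X" "c \<in> A"
  shows "X c c = 0"
  using skew_onD[OF assms assms(2)] by linarith

lemma cross_sign_skew: "gd_wf D \<Longrightarrow> skew_on (chords D) (cross_sign D)"
  unfolding skew_on_def
proof (intro ballI)
  fix c d assume D: "gd_wf D" and cd: "c \<in> chords D" "d \<in> chords D"
  show "cross_sign D d c = - cross_sign D c d"
  proof (cases "c = d")
    case False
    have "distinct [pos D c True, pos D c False, pos D d True, pos D d False]"
      using pos_inj[OF D] cd False by auto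
    from cyc_cross_antisym[OF this] show ?thesis
      using cross_sign_cyc_cross[OF D cd] cross_sign_cyc_cross[OF D cd(2,1)] False by simp
  qed simp
qed

section \<open>The invariant as a function of the intersection matrix\<close>

text \<open>The data of a Gauss diagram that enter F_coef are its chords A, the writhes w and the
matrix X of crossing signs (+1 for crosses_LR, -1 for crosses_RL, 0 otherwise); a chord d
crossing c from right to left contributes -w(d) s^\<phi>(-Ind d), i.e. X c d * w d at exponent
\<phi>(X c d * Ind d).\<close>

definition Ind_mat :: "nat set \<Rightarrow> (nat \<Rightarrow> int) \<Rightarrow> (nat \<Rightarrow> nat \<Rightarrow> int) \<Rightarrow> nat \<Rightarrow> int" where
  "Ind_mat A w X c = (\<Sum>d\<in>A. X c d * w d)"

definition gpoly_mat :: "nat set \<Rightarrow> (nat \<Rightarrow> int) \<Rightarrow> (nat \<Rightarrow> nat \<Rightarrow> int) \<Rightarrow> nat \<Rightarrow> lpoly" where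
  "gpoly_mat A w X c = (\<lambda>k. \<Sum>d\<in>A.
     if X c d \<noteq> 0 \<and> phi \<bar>Ind_mat A w X c\<bar> (X c d * Ind_mat A w X d) = k then X c d * w d else 0)"

definition F_mat :: "nat set \<Rightarrow> (nat \<Rightarrow> int) \<Rightarrow> (nat \<Rightarrow> nat \<Rightarrow> int) \<Rightarrow> lpoly set \<Rightarrow> int" where
  "F_mat A w X C = (\<Sum>c\<in>{c\<in>A. lcls (gpoly_mat A w X c) = C}. w c)
                 - (if C = lcls lzero then (\<Sum>c\<in>A. w c) else 0)"

lemma sum_over_chords:
  assumes "\<And>d. P d \<Longrightarrow> d \<in> chords D"
  shows "(\<Sum>d\<in>{d. P d}. f d) = (\<Sum>d\<in>chords D. if P d then f d else (0::int))"
proof -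
  have "{d. P d} = {d \<in> chords D. P d}" using assms by blast
  thus ?thesis using sum.inter_filter[OF finite_chords] by simp
qed

lemma crosses_LR_RL_disjoint: "crosses_LR D c d \<Longrightarrow> \<not> crosses_RL D c d"
  by (simp add: crosses_LR_def crosses_RL_def)

lemma Ind_eq_Ind_mat: "Ind D c = Ind_mat (chords D) (wr D) (cross_sign D) c"
proof -
  have "Ind D c = (\<Sum>d\<in>chords D. if crosses_LR D c d then wr D d else 0)
                - (\<Sum>d\<in>chords D. if crosses_RL D c d then wr D d else 0)"
    unfolding Ind_def
    by (subst (1 2) sum_over_chords) (auto simp: crosses_LR_def crosses_RL_def)
  also have "\<dots> = (\<Sum>d\<in>chords D. cross_sign D c d * wr D d)"
    unfolding sum_subtractf[symmetric] cross_sign_def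
    by (rule sum.cong) (auto dest: crosses_LR_RL_disjoint)
  finally show ?thesis by (simp add: Ind_mat_def)
qed

lemma gpoly_eq_gpoly_mat: "gpoly D c = gpoly_mat (chords D) (wr D) (cross_sign D) c"
proof
  fix k
  let ?N = "\<bar>Ind D c\<bar>"
  have "gpoly D c k = (\<Sum>d\<in>chords D. if crosses_LR D c d \<and> phi ?N (Ind D d) = k then wr D d else 0)
                - (\<Sum>d\<in>chords D. if crosses_RL D c d \<and> phi ?N (- Ind D d) = k then wr D d else 0)"
    unfolding gpoly_def
    by (subst (1 2) sum_over_chords) (auto simp: crosses_LR_def crosses_RL_def)
  also have "\<dots> = gpoly_mat (chords D) (wr D) (cross_sign D) c k"
    unfolding gpoly_mat_def sum_subtractf[symmetric] Ind_eq_Ind_mat[symmetric]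
    by (rule sum.cong) (auto simp: cross_sign_def dest: crosses_LR_RL_disjoint)
  finally show "gpoly D c k = gpoly_mat (chords D) (wr D) (cross_sign D) c k" .
qed

lemma F_coef_eq_F_mat: "F_coef D C = F_mat (chords D) (wr D) (cross_sign D) C"
  unfolding F_coef_def F_mat_def gpoly_eq_gpoly_mat writhe_def by simp

lemma F_mat_reindex:
  assumes inj: "inj_on f A"
    and w: "\<And>c. c\<in>A \<Longrightarrow> w' (f c) = w c"
    and X: "\<And>c d. c\<in>A \<Longrightarrow> d\<in>A \<Longrightarrow> X' (f c) (f d) = X c d"
  shows "F_mat (f`A) w' X' C = F_mat A w X C"
proof -
  have Ind: "Ind_mat (f`A) w' X' (f c) = Ind_mat A w X c" if "c\<in>A" for c
    unfolding Ind_mat_def sum.reindex[OF inj] using that w X by (auto intro!: sum.cong)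
  have g: "gpoly_mat (f`A) w' X' (f c) = gpoly_mat A w X c" if "c\<in>A" for c
    unfolding gpoly_mat_def sum.reindex[OF inj] using that w X Ind by (auto intro!: sum.cong)
  have S: "{c\<in>f`A. lcls (gpoly_mat (f`A) w' X' c) = C} = f ` {c\<in>A. lcls (gpoly_mat A w X c) = C}"
    using g by auto
  have inj_S: "inj_on f {c\<in>A. lcls (gpoly_mat A w X c) = C}" using inj by (rule inj_on_subset) auto
  show ?thesis unfolding F_mat_def S sum.reindex[OF inj_S] sum.reindex[OF inj]
    using w by (auto intro!: sum.cong)
qed

text \<open>Omega 1 adds a chord that crosses nothing; its polynomial is 0 and it cancels
against its contribution to the writhe.\<close>
lemma F_mat_insert_isolated:
  assumes fin: "finite A" and l: "l \<notin> A"
    and w: "\<And>c. c\<in>A \<Longrightarrow> w' c = w c"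
    and X: "\<And>c d. c\<in>A \<Longrightarrow> d\<in>A \<Longrightarrow> X' c d = X c d"
    and skew: "skew_on (insert l A) X'"
    and isolated: "\<And>d. d\<in>A \<Longrightarrow> X' l d = 0"
  shows "F_mat (insert l A) w' X' C = F_mat A w X C"
proof -
  have row_l: "X' l d = 0" if "d \<in> insert l A" for d
    using that isolated skew_on_diag[OF skew] by auto
  have col_l: "X' d l = 0" if "d \<in> A" for d
    using that skew_onD[OF skew, of l d] isolated by simp
  have Ind: "Ind_mat (insert l A) w' X' c = Ind_mat A w X c" if "c\<in>A" for c
    unfolding Ind_mat_def using fin l that w X col_l by (auto intro!: sum.cong)
  have g: "gpoly_mat (insert l A) w' X' c = gpoly_mat A w X c" if "c\<in>A" for c
    unfolding gpoly_mat_def using fin l that w X col_l Ind by (auto intro!: sum.cong)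
  have g_l: "gpoly_mat (insert l A) w' X' l = lzero"
    unfolding gpoly_mat_def lzero_def using row_l by simp
  have S: "{c\<in>insert l A. lcls (gpoly_mat (insert l A) w' X' c) = C} =
      (if lcls lzero = C then insert l {c\<in>A. lcls (gpoly_mat A w X c) = C}
       else {c\<in>A. lcls (gpoly_mat A w X c) = C})"
    using g g_l by auto
  have "(\<Sum>c\<in>{c\<in>A. lcls (gpoly_mat A w X c) = C}. w' c) = (\<Sum>c\<in>{c\<in>A. lcls (gpoly_mat A w X c) = C}. w c)"
       "(\<Sum>c\<in>A. w' c) = (\<Sum>c\<in>A. w c)"
    using w by (auto intro!: sum.cong)
  thus ?thesis unfolding F_mat_def S using fin l by auto
qed

lemma phi_mult_self: "phi \<bar>I\<bar> (x * I) = phi \<bar>I\<bar> 0"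
  by (cases "I = 0") (auto simp: phi_def)

lemma phi_add_mult_self: "phi \<bar>I\<bar> (y + m * I) = phi \<bar>I\<bar> y"
proof (cases "I = 0")
  case False
  have e: "m * I = \<bar>I\<bar> * (sgn I * m)" by (simp add: abs_mult_sgn mult.assoc[symmetric])
  have "(y + m * I) mod \<bar>I\<bar> = y mod \<bar>I\<bar>" unfolding e by simp
  thus ?thesis using False by (simp add: phi_def)
qed simp

text \<open>Omega 2 adds two chords a, b of opposite writhe that cross every other chord in the same
way. They have the same index and the same polynomial (their mutual contribution sits at
exponent \<phi>(\<plusminus>Ind a) = 0), and their contributions cancel everywhere else.\<close>
lemma F_mat_insert_parallel_pair:
  assumes fin: "finite A" and a: "a \<notin> A" and b: "b \<notin> A" and ab: "a \<noteq> b"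
    and wab: "w' b = - w' a"
    and w: "\<And>c. c\<in>A \<Longrightarrow> w' c = w c"
    and X: "\<And>c d. c\<in>A \<Longrightarrow> d\<in>A \<Longrightarrow> X' c d = X c d"
    and skew: "skew_on (insert a (insert b A)) X'"
    and parallel: "\<And>d. d\<in>A \<Longrightarrow> X' a d = X' b d"
  shows "F_mat (insert a (insert b A)) w' X' C = F_mat A w X C"
proof -
  let ?A = "insert a (insert b A)"
  have sum_A: "(\<Sum>d\<in>?A. f d) = f a + f b + (\<Sum>d\<in>A. f d)" for f :: "nat \<Rightarrow> int"
    using fin a b ab by simp
  have col: "X' d a = - X' a d" "X' d b = - X' b d" if "d \<in> A" for d
    by (rule skew_onD[OF skew]; use that in simp)+
  have diag: "X' a a = 0" "X' b b = 0"
    by (rule skew_on_diag[OF skew]; simp)+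
  have Xba: "X' b a = - X' a b"
    by (rule skew_onD[OF skew]) simp_all
  have Ind: "Ind_mat ?A w' X' c = Ind_mat A w X c" if "c\<in>A" for c
    unfolding Ind_mat_def sum_A using that w X parallel col wab by (auto intro!: sum.cong)
  have Ind_ab: "Ind_mat ?A w' X' a = Ind_mat ?A w' X' b"
    unfolding Ind_mat_def sum_A using parallel Xba diag wab by (auto intro!: sum.cong)
  have g: "gpoly_mat ?A w' X' c = gpoly_mat A w X c" if "c\<in>A" for c
  proof
    fix k
    have "X' c b = X' c a" using col parallel that by simp
    thus "gpoly_mat ?A w' X' c k = gpoly_mat A w X c k"
      unfolding gpoly_mat_def sum_A using that w X Ind Ind_ab wab by (auto intro!: sum.cong)
  qed
  have g_ab: "gpoly_mat ?A w' X' a = gpoly_mat ?A w' X' b"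
  proof
    fix k
    let ?I = "Ind_mat ?A w' X' b"
    have "phi \<bar>?I\<bar> (X' a b * ?I) = phi \<bar>?I\<bar> (- X' a b * ?I)"
      using phi_mult_self[of ?I] by metis
    thus "gpoly_mat ?A w' X' a k = gpoly_mat ?A w' X' b k"
      unfolding gpoly_mat_def sum_A using parallel Xba diag wab Ind_ab by (auto intro!: sum.cong)
  qed
  define S where "S = {c\<in>A. lcls (gpoly_mat A w X c) = C}"
  have S_eq: "{c\<in>?A. lcls (gpoly_mat ?A w' X' c) = C} =
      (if lcls (gpoly_mat ?A w' X' a) = C then insert a (insert b S) else S)"
    using g g_ab by (auto simp: S_def)
  have "(\<Sum>c\<in>S. w' c) = (\<Sum>c\<in>S. w c)" "(\<Sum>c\<in>A. w' c) = (\<Sum>c\<in>A. w c)"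
    using w by (auto simp: S_def intro!: sum.cong)
  moreover have "finite S" "a \<notin> S" "b \<notin> S" using fin a b by (auto simp: S_def)
  ultimately show ?thesis unfolding F_mat_def S_eq S_def[symmetric] sum_A using ab wab by auto
qed

lemma signed_pair_terms_eq:
  fixes y1 y2 z1 z2 v1 v2 :: int
  assumes "y1 \<in> {-1,0,1}" "y2 \<in> {-1,0,1}" "z1 \<in> {-1,0,1}" "z2 \<in> {-1,0,1}"
    and bal: "\<And>\<sigma>. \<sigma> \<in> {1,-1} \<Longrightarrow> (if y1 = \<sigma> then v1 else 0) + (if y2 = \<sigma> then v2 else 0)
                                = (if z1 = \<sigma> then v1 else 0) + (if z2 = \<sigma> then v2 else 0)"
  shows "(if y1 \<noteq> 0 \<and> f y1 = k then y1 * v1 else 0) + (if y2 \<noteq> 0 \<and> f y2 = k then y2 * v2 else 0)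
       = (if z1 \<noteq> 0 \<and> f z1 = k then z1 * v1 else 0) + (if z2 \<noteq> 0 \<and> f z2 = k then z2 * v2 else 0)"
  using assms(1-4) bal[of 1] bal[of "-1"] by (auto split: if_splits)

lemma signed_term_flip:
  fixes e y :: int
  assumes "e \<in> {1,-1}" "\<And>s. g (s * I) = f (e * s)"
  shows "(if y \<noteq> 0 \<and> g (y * I) = k then y * v else 0)
       = (if e * y \<noteq> 0 \<and> f (e * y) = k then (e * y) * (e * v) else 0)"
  using assms by auto

text \<open>The signs ep, eq record whether an entry y in column p, q of row x contributes at
exponent f y or f (-y).\<close>
lemma gpoly_mat_eq_if_row_pair_balanced:
  assumes fin: "finite A" and x: "x \<in> A" and pq: "p \<in> A" "q \<in> A" "p \<noteq> q"
    and row: "\<And>d. d \<in> A - {p,q} \<Longrightarrow> X' x d = X x d"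
    and Ind: "\<And>d. d \<in> A \<Longrightarrow> Ind_mat A w X' d = Ind_mat A w X d"
    and signs: "ep \<in> {1,-1}" "eq \<in> {1,-1}"
    and expo: "\<And>s. phi \<bar>Ind_mat A w X x\<bar> (s * Ind_mat A w X p) = f (ep * s)"
              "\<And>s. phi \<bar>Ind_mat A w X x\<bar> (s * Ind_mat A w X q) = f (eq * s)"
    and range: "\<And>d e. X d e \<in> {-1,0,1}" "\<And>d e. X' d e \<in> {-1,0,1}"
    and bal: "\<And>\<sigma>. \<sigma> \<in> {1,-1} \<Longrightarrow>
      (if ep * X x p = \<sigma> then ep * w p else 0) + (if eq * X x q = \<sigma> then eq * w q else 0)
    = (if ep * X' x p = \<sigma> then ep * w p else 0) + (if eq * X' x q = \<sigma> then eq * w q else 0)"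
  shows "gpoly_mat A w X' x = gpoly_mat A w X x"
proof
  fix k
  let ?I = "Ind_mat A w X"
  define t where "t Y d = (if Y x d \<noteq> 0 \<and> phi \<bar>?I x\<bar> (Y x d * ?I d) = k then Y x d * w d else 0)"
    for Y :: "nat \<Rightarrow> nat \<Rightarrow> int" and d
  have A: "A = insert p (insert q (A - {p,q}))" using pq by auto
  have split: "gpoly_mat A w Y x k = t Y p + t Y q + (\<Sum>d\<in>A - {p,q}. t Y d)"
    if "\<And>d. d \<in> A \<Longrightarrow> Ind_mat A w Y d = ?I d" for Y
    unfolding gpoly_mat_def t_def using that x fin pq
    by (subst A) (simp add: add.assoc)
  have flip: "t Y d = (if e * Y x d \<noteq> 0 \<and> f (e * Y x d) = k then (e * Y x d) * (e * w d) else 0)"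
    if "e \<in> {1,-1}" "\<And>s. phi \<bar>?I x\<bar> (s * ?I d) = f (e * s)" for Y d e
    unfolding t_def
    by (rule signed_term_flip[where g = "phi \<bar>?I x\<bar>" and I = "?I d" and f = f, OF that])
  have rng: "e * y \<in> {-1,0,1}" if "e \<in> {1,-1}" "y \<in> {-1,0,1}" for e y :: int
    using that by auto
  have "t X p + t X q = t X' p + t X' q"
    unfolding flip[OF signs(1) expo(1)] flip[OF signs(2) expo(2)]
    by (rule signed_pair_terms_eq[OF rng[OF signs(1) range(1)[of x p]] rng[OF signs(2) range(1)[of x q]]
          rng[OF signs(1) range(2)[of x p]] rng[OF signs(2) range(2)[of x q]] bal])
  moreover have "(\<Sum>d\<in>A - {p,q}. t X' d) = (\<Sum>d\<in>A - {p,q}. t X d)"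
    by (rule sum.cong) (simp_all add: t_def row)
  ultimately show "gpoly_mat A w X' x k = gpoly_mat A w X x k"
    using split[of X'] split[of X] Ind by simp
qed

text \<open>Omega 3 changes only the mutual crossing signs of three chords a, b, c. The decisive
consequence of the hypotheses is Ind b = Ind a + Ind c: modulo the index of any of the three
chords, the two entries of its row are then read at one exponent function, and the balance
conditions bal_a, bal_b, bal_c suffice.\<close>
locale triangle_move =
  fixes A :: "nat set" and w :: "nat \<Rightarrow> int" and X X' :: "nat \<Rightarrow> nat \<Rightarrow> int" and a b c :: nat
  assumes fin: "finite A" and abc: "a \<in> A" "b \<in> A" "c \<in> A" "a \<noteq> b" "a \<noteq> c" "b \<noteq> c"
    and outside: "\<And>d e. d \<in> A \<Longrightarrow> e \<in> A \<Longrightarrow> \<not> (d \<in> {a,b,c} \<and> e \<in> {a,b,c}) \<Longrightarrow> X' d e = X d e"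
    and skew: "skew_on A X" "skew_on A X'"
    and range: "\<And>d e. X d e \<in> {-1,0,1}" "\<And>d e. X' d e \<in> {-1,0,1}"
    and rel: "\<And>d. d \<in> A - {a,b,c} \<Longrightarrow> X d b = X d a + X d c"
    and local_Ind: "X a b * w b + X a c * w c = X' a b * w b + X' a c * w c"
                   "- X a b * w a + X b c * w c = - X' a b * w a + X' b c * w c"
                   "- X a c * w a - X b c * w b = - X' a c * w a - X' b c * w b"
    and local_add: "- X a b * w a + X b c * w c = (X a b * w b + X a c * w c) + (- X a c * w a - X b c * w b)"
    and bal_a: "\<And>\<sigma>. \<sigma> \<in> {1,-1} \<Longrightarrow> (if X a b = \<sigma> then w b else 0) + (if X a c = \<sigma> then w c else 0)
                 = (if X' a b = \<sigma> then w b else 0) + (if X' a c = \<sigma> then w c else 0)"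
    and bal_b: "\<And>\<sigma>. \<sigma> \<in> {1,-1} \<Longrightarrow> (if - X a b = \<sigma> then w a else 0) + (if - X b c = \<sigma> then - w c else 0)
                 = (if - X' a b = \<sigma> then w a else 0) + (if - X' b c = \<sigma> then - w c else 0)"
    and bal_c: "\<And>\<sigma>. \<sigma> \<in> {1,-1} \<Longrightarrow> (if - X a c = \<sigma> then w a else 0) + (if - X b c = \<sigma> then w b else 0)
                 = (if - X' a c = \<sigma> then w a else 0) + (if - X' b c = \<sigma> then w b else 0)"
begin

lemma Ind_mat_split:
  assumes Y: "skew_on A Y"
  shows "Ind_mat A w Y a = Y a b * w b + Y a c * w c + Ind_mat (A - {a,b,c}) w Y a"
    "Ind_mat A w Y b = - Y a b * w a + Y b c * w c + Ind_mat (A - {a,b,c}) w Y b"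
    "Ind_mat A w Y c = - Y a c * w a - Y b c * w b + Ind_mat (A - {a,b,c}) w Y c"
proof -
  let ?R = "A - {a,b,c}"
  have sum_A: "(\<Sum>d\<in>A. f d) = f a + f b + f c + (\<Sum>d\<in>?R. f d)" for f :: "nat \<Rightarrow> int"
  proof -
    have "A = insert a (insert b (insert c ?R))" using abc by auto
    hence "(\<Sum>d\<in>A. f d) = (\<Sum>d\<in>insert a (insert b (insert c ?R)). f d)" by simp
    also have "\<dots> = f a + f b + f c + (\<Sum>d\<in>?R. f d)" using fin abc by simp
    finally show ?thesis .
  qed
  have "Y b a = - Y a b" "Y c a = - Y a c" "Y c b = - Y b c"
    using skew_onD[OF Y abc(1,2)] skew_onD[OF Y abc(1,3)] skew_onD[OF Y abc(2,3)] by simp_all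
  moreover have "Y a a = 0" "Y b b = 0" "Y c c = 0"
    using skew_on_diag[OF Y] abc by simp_all
  ultimately show
    "Ind_mat A w Y a = Y a b * w b + Y a c * w c + Ind_mat ?R w Y a"
    "Ind_mat A w Y b = - Y a b * w a + Y b c * w c + Ind_mat ?R w Y b"
    "Ind_mat A w Y c = - Y a c * w a - Y b c * w b + Ind_mat ?R w Y c"
    unfolding Ind_mat_def sum_A by simp_all
qed

lemma row_fixed:
  assumes "x \<in> A" "d \<in> A" "x \<notin> {a,b,c} \<or> d \<notin> {a,b,c} \<or> d = x"
  shows "X' x d = X x d"
  using assms outside skew_on_diag[OF skew(1)] skew_on_diag[OF skew(2)] by auto

lemma Ind_eq: "d \<in> A \<Longrightarrow> Ind_mat A w X' d = Ind_mat A w X d"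
proof (cases "d \<in> A - {a,b,c}")
  case True
  thus ?thesis unfolding Ind_mat_def by (intro sum.cong) (auto intro!: row_fixed)
next
  case False
  have "Ind_mat (A - {a,b,c}) w X' x = Ind_mat (A - {a,b,c}) w X x" if "x \<in> A" for x
    unfolding Ind_mat_def using that by (intro sum.cong) (auto intro!: row_fixed)
  moreover assume "d \<in> A"
  ultimately show ?thesis
    using False Ind_mat_split[OF skew(1)] Ind_mat_split[OF skew(2)] abc local_Ind by auto
qed

lemma Ind_add: "Ind_mat A w X b = Ind_mat A w X a + Ind_mat A w X c"
proof -
  have "X b d = X a d + X c d" if "d \<in> A - {a,b,c}" for d
    using rel[OF that] skew_onD[OF skew(1) _ abc(1), of d] skew_onD[OF skew(1) _ abc(2), of d]
      skew_onD[OF skew(1) _ abc(3), of d] that by simp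
  hence "Ind_mat (A - {a,b,c}) w X b = Ind_mat (A - {a,b,c}) w X a + Ind_mat (A - {a,b,c}) w X c"
    unfolding Ind_mat_def sum.distrib[symmetric] by (intro sum.cong) (simp_all add: distrib_right)
  thus ?thesis using Ind_mat_split[OF skew(1)] local_add by simp
qed

lemma gpoly_mat_eq_triangle_row:
  assumes x: "x \<in> {a,b,c}" and pq: "p \<in> A" "q \<in> A" "p \<noteq> q" "{x,p,q} = {a,b,c}"
    and signs: "ep \<in> {1,-1}" "eq \<in> {1,-1}"
    and expo: "\<And>s. phi \<bar>Ind_mat A w X x\<bar> (s * Ind_mat A w X p) = f (ep * s)"
              "\<And>s. phi \<bar>Ind_mat A w X x\<bar> (s * Ind_mat A w X q) = f (eq * s)"
    and bal: "\<And>\<sigma>. \<sigma> \<in> {1,-1} \<Longrightarrow>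
      (if ep * X x p = \<sigma> then ep * w p else 0) + (if eq * X x q = \<sigma> then eq * w q else 0)
    = (if ep * X' x p = \<sigma> then ep * w p else 0) + (if eq * X' x q = \<sigma> then eq * w q else 0)"
  shows "gpoly_mat A w X' x = gpoly_mat A w X x"
proof (rule gpoly_mat_eq_if_row_pair_balanced[OF fin _ pq(1-3) _ Ind_eq signs expo range bal])
  show "x \<in> A" using x abc by auto
  show "X' x d = X x d" if "d \<in> A - {p,q}" for d
    using that x pq(4) abc(1-3) by (intro row_fixed) auto
qed

lemma gpoly_mat_eq:
  assumes xA: "x \<in> A"
  shows "gpoly_mat A w X' x = gpoly_mat A w X x"
proof (cases "x \<in> A - {a,b,c}")
  case True
  show ?thesis unfolding gpoly_mat_def using True Ind_eq row_fixed by (intro ext sum.cong) auto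
next
  case False
  let ?I = "Ind_mat A w X"
  from False consider "x = a" | "x = b" | "x = c" using xA by blast
  thus ?thesis
  proof cases
    case 1
    have expo: "phi \<bar>?I a\<bar> (s * ?I b) = phi \<bar>?I a\<bar> (s * ?I c)" for s
      using phi_add_mult_self[of "?I a" "s * ?I c" s] Ind_add by (simp add: algebra_simps)
    show ?thesis unfolding 1
      by (rule gpoly_mat_eq_triangle_row[of a b c 1 1 "\<lambda>s. phi \<bar>?I a\<bar> (s * ?I c)"])
        (use abc expo bal_a in \<open>simp_all cong: if_cong split del: if_split\<close>)
  next
    case 2
    have expo: "phi \<bar>?I b\<bar> (s * ?I c) = phi \<bar>?I b\<bar> (- s * ?I a)" for s
      using phi_add_mult_self[of "?I b" "- s * ?I a" s] Ind_add by (simp add: algebra_simps)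
    have skew_ba: "X b a = - X a b" "X' b a = - X' a b"
      using skew_onD[OF skew(1) abc(1,2)] skew_onD[OF skew(2) abc(1,2)] by simp_all
    show ?thesis unfolding 2
      by (rule gpoly_mat_eq_triangle_row[of b a c 1 "-1" "\<lambda>s. phi \<bar>?I b\<bar> (s * ?I a)"])
        (use abc expo skew_ba bal_b in \<open>simp_all add: insert_commute cong: if_cong split del: if_split\<close>)
  next
    case 3
    have expo: "phi \<bar>?I c\<bar> (s * ?I b) = phi \<bar>?I c\<bar> (s * ?I a)" for s
      using phi_add_mult_self[of "?I c" "s * ?I a" s] Ind_add by (simp add: algebra_simps)
    have skew_c: "X c a = - X a c" "X' c a = - X' a c" "X c b = - X b c" "X' c b = - X' b c"
      using skew_onD[OF skew(1) abc(1,3)] skew_onD[OF skew(2) abc(1,3)]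
        skew_onD[OF skew(1) abc(2,3)] skew_onD[OF skew(2) abc(2,3)] by simp_all
    show ?thesis unfolding 3
      by (rule gpoly_mat_eq_triangle_row[of c a b 1 1 "\<lambda>s. phi \<bar>?I c\<bar> (s * ?I a)"])
        (use abc expo skew_c bal_c in \<open>simp_all add: insert_commute cong: if_cong split del: if_split\<close>)
  qed
qed

lemma F_mat_eq: "F_mat A w X' C = F_mat A w X C"
proof -
  have "{c\<in>A. lcls (gpoly_mat A w X' c) = C} = {c\<in>A. lcls (gpoly_mat A w X c) = C}"
    using gpoly_mat_eq by auto
  thus ?thesis unfolding F_mat_def by simp
qed

end

section \<open>Invariance under the Reidemeister moves\<close>

lemma cross_sign_transfer:
  assumes D: "gd_wf D" and E: "gd_wf E"
    and cd: "c \<in> chords D" "d \<in> chords D" "c \<noteq> d" and cd': "c' \<in> chords E" "d' \<in> chords E" "c' \<noteq> d'"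
    and pos: "\<And>t. pos E c' t = \<sigma> (pos D c t)" "\<And>t. pos E d' t = \<sigma> (pos D d t)"
    and cyc: "\<And>p k q. p < length D \<Longrightarrow> k < length D \<Longrightarrow> q < length D \<Longrightarrow>
                cyc_between (\<sigma> p) (\<sigma> k) (\<sigma> q) = cyc_between p k q"
  shows "cross_sign E c' d' = cross_sign D c d"
  using cross_sign_cyc_cross[OF E cd'] cross_sign_cyc_cross[OF D cd] pos cyc pos_nth(1)[OF D] cd
  by (simp add: cyc_cross_def)

lemma cross_sign_transfer_mono:
  assumes D: "gd_wf D" and E: "gd_wf E"
    and cd: "c \<in> chords D" "d \<in> chords D" "c \<in> chords E" "d \<in> chords E"
    and pos: "\<And>x t. x \<in> chords D \<Longrightarrow> pos E x t = \<sigma> (pos D x t)"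
    and mono: "strict_mono \<sigma>"
  shows "cross_sign E c d = cross_sign D c d"
proof (cases "c = d")
  case False
  show ?thesis
    by (rule cross_sign_transfer[OF D E cd(1,2) False cd(3,4) False pos[OF cd(1)] pos[OF cd(2)]])
       (rule cyc_between_mono[OF mono])
qed simp

lemma cyc_between_rotate:
  assumes "p < n" "k < n" "q < n"
  shows "cyc_between (if p = 0 then n - 1 else p - 1) (if k = 0 then n - 1 else k - 1) (if q = 0 then n - 1 else q - 1)
       = cyc_between p k q"
  using assms unfolding cyc_between_def by auto

lemma F_coef_rotate1:
  assumes D: "gd_wf D" and E: "gd_wf (rotate1 D)"
  shows "F_coef (rotate1 D) C = F_coef D C"
proof -
  let ?E = "rotate1 D" and ?n = "length D"
  let ?\<sigma> = "\<lambda>p. if p = 0 then ?n - 1 else p - 1"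
  have ch: "chords ?E = chords D" by (simp add: chords_def)
  have w: "wr ?E = wr D" by (simp add: wr_def fun_eq_iff)
  have pos: "pos ?E c t = ?\<sigma> (pos D c t)" if c: "c \<in> chords D" for c t
  proof (rule pos_transfer[OF D E c])
    fix i assume i: "i < ?n"
    hence "Suc (?\<sigma> i) mod ?n = i" by auto
    thus "?\<sigma> i < length ?E \<and> ?E ! ?\<sigma> i = D ! i" using nth_rotate1[of "?\<sigma> i" D] i by auto
  qed
  have X: "cross_sign ?E c d = cross_sign D c d" if "c \<in> chords D" "d \<in> chords D" for c d
  proof (cases "c = d")
    case False
    show ?thesis
      by (rule cross_sign_transfer[OF D E that False that[folded ch] False, where \<sigma> = ?\<sigma>])
         (use pos that cyc_between_rotate in auto)
  qed simp
  show ?thesis unfolding F_coef_eq_F_mat ch w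
    using F_mat_reindex[of id "chords D" "wr D" "wr D" "cross_sign ?E" "cross_sign D" C] X by simp
qed

lemma F_coef_rename:
  assumes D: "gd_wf D" and E: "gd_wf (map (\<lambda>(l,t,s). (f l, t, s)) D)" and inj: "inj_on f (chords D)"
  shows "F_coef (map (\<lambda>(l,t,s). (f l, t, s)) D) C = F_coef D C"
proof -
  let ?E = "map (\<lambda>(l,t,s). (f l, t, s)) D"
  have ch: "chords ?E = f ` chords D" by (force simp: chords_def)
  have w: "wr ?E (f c) = wr D c" if "c \<in> chords D" for c
  proof -
    have "(f c, True, True) \<in> set ?E \<longleftrightarrow> (c, True, True) \<in> set D"
    proof
      assume "(f c, True, True) \<in> set ?E"
      then obtain l where l: "(l, True, True) \<in> set D" "f l = f c" by auto
      thus "(c, True, True) \<in> set D" using chordsI[OF l(1)] inj that by (metis inj_on_def)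
    qed force
    thus ?thesis by (simp add: wr_def)
  qed
  have pos: "pos ?E (f c) t = pos D c t" if c: "c \<in> chords D" for c t
    using pos_eqI[OF E, of "pos D c t"] pos_nth[OF D c] by (simp add: case_prod_beta)
  have X: "cross_sign ?E (f c) (f d) = cross_sign D c d" if "c \<in> chords D" "d \<in> chords D" for c d
  proof (cases "c = d")
    case False
    hence "f c \<noteq> f d" using inj that by (meson inj_on_def)
    thus ?thesis
      by (intro cross_sign_transfer[OF D E that, where \<sigma> = id]) (use pos that ch False in auto)
  qed simp
  show ?thesis unfolding F_coef_eq_F_mat ch
    by (rule F_mat_reindex[OF inj]) (use w X in auto)
qed

lemma cyc_cross_adjacent:
  assumes "p = m \<and> q = Suc m \<or> p = Suc m \<and> q = m" "r \<notin> {m, Suc m}" "s \<notin> {m, Suc m}"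
  shows "cyc_cross p q r s = 0"
  using assms unfolding cyc_cross_def cyc_between_def by auto

lemma F_coef_omega1:
  assumes D: "gd_wf (u @ v)" and E: "gd_wf (u @ [(l,t,s),(l,\<not>t,s)] @ v)"
    and l: "l \<notin> chords (u @ v)"
  shows "F_coef (u @ [(l,t,s),(l,\<not>t,s)] @ v) C = F_coef (u @ v) C"
proof -
  let ?D = "u @ v" and ?E = "u @ [(l,t,s),(l,\<not>t,s)] @ v" and ?m = "length u"
  let ?\<sigma> = "\<lambda>i. if i < ?m then i else i + 2"
  have mono: "strict_mono ?\<sigma>" by (auto simp: strict_mono_def)
  have ch: "chords ?E = insert l (chords ?D)" by (auto simp: chords_def)
  have w: "wr ?E c = wr ?D c" if "c \<in> chords ?D" for c
    using that l by (auto simp: wr_def)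
  have pos: "pos ?E x t' = ?\<sigma> (pos ?D x t')" if "x \<in> chords ?D" for x t'
    by (rule pos_transfer[OF D E that]) (auto simp: nth_append)
  have lE: "l \<in> chords ?E" using ch by simp
  have pos_l: "pos ?E l t = ?m" "pos ?E l (\<not>t) = Suc ?m"
    by (rule pos_eqI[OF E]; simp add: nth_append)+
  have X: "cross_sign ?E c d = cross_sign ?D c d" if "c \<in> chords ?D" "d \<in> chords ?D" for c d
    by (rule cross_sign_transfer_mono[OF D E that _ _ pos mono]) (use that ch in auto)
  have isolated: "cross_sign ?E l d = 0" if "d \<in> chords ?D" for d
  proof -
    have dl: "d \<noteq> l" using that l by auto
    have dE: "d \<in> chords ?E" using that ch by simp
    have "pos ?E d t' \<notin> {?m, Suc ?m}" for t'
      using pos_inj[OF E dE lE, of t' t] pos_inj[OF E dE lE, of t' "\<not>t"] pos_l dl by auto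
    thus ?thesis unfolding cross_sign_cyc_cross[OF E lE dE dl[symmetric]]
      by (intro cyc_cross_adjacent[where m = ?m]) (use pos_l in \<open>cases t; simp\<close>)+
  qed
  show ?thesis unfolding F_coef_eq_F_mat ch
    by (rule F_mat_insert_isolated[OF finite_chords l])
       (use w X cross_sign_skew[OF E] ch isolated in auto)
qed

lemma cyc_between_blocks:
  assumes "x \<in> {M, Suc M}" "x' \<in> {M, Suc M}" "y \<in> {N, Suc N}" "y' \<in> {N, Suc N}"
    and "Suc M < N \<or> Suc N < M" "r \<notin> {M, Suc M, N, Suc N}"
  shows "cyc_between x r y = cyc_between x' r y'"
proof -
  have shift_left: "cyc_between (Suc M) r z = cyc_between M r z" if "z \<notin> {M, Suc M}" for z
    using that assms(6) unfolding cyc_between_def by auto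
  have shift_right: "cyc_between z r (Suc N) = cyc_between z r N" if "z \<notin> {N, Suc N}" for z
    using that assms(6) unfolding cyc_between_def by auto
  have "cyc_between x r y = cyc_between M r N" if "x \<in> {M, Suc M}" "y \<in> {N, Suc N}" for x y
  proof -
    have "cyc_between x r y = cyc_between M r y"
      using that assms(5) shift_left[of y] by (cases "x = M") auto
    also have "\<dots> = cyc_between M r N"
      using that assms(5) shift_right[of M] by (cases "y = N") auto
    finally show ?thesis .
  qed
  thus ?thesis using assms(1-4) by metis
qed

lemma pos_in_block:
  assumes E: "gd_wf E" and "Suc m < length E" and "(y, t, s) \<in> {E ! m, E ! Suc m}"
  shows "pos E y t \<in> {m, Suc m}"
proof -
  from assms(3) consider "E ! m = (y,t,s)" | "E ! Suc m = (y,t,s)" by auto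
  thus ?thesis using pos_eqI[OF E, of m y t] pos_eqI[OF E, of "Suc m" y t] assms(2) by cases auto
qed

lemma cross_sign_eq_if_parallel:
  assumes E: "gd_wf E" and abd: "a \<in> chords E" "b \<in> chords E" "d \<in> chords E" "a \<noteq> d" "b \<noteq> d"
    and blocks: "pos E a t \<in> {m, Suc m}" "pos E b t \<in> {m, Suc m}"
      "pos E a (\<not>t) \<in> {n, Suc n}" "pos E b (\<not>t) \<in> {n, Suc n}"
    and sep: "Suc m < n" and d_out: "\<And>t'. pos E d t' \<notin> {m, Suc m, n, Suc n}"
  shows "cross_sign E a d = cross_sign E b d"
proof -
  have "cyc_between (pos E a True) r (pos E a False) = cyc_between (pos E b True) r (pos E b False)"
    if "r \<notin> {m, Suc m, n, Suc n}" for r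
  proof (cases t)
    case True
    show ?thesis
      by (rule cyc_between_blocks[where M = m and N = n]) (use blocks sep that True in simp_all)
  next
    case False
    show ?thesis
      by (rule cyc_between_blocks[where M = n and N = m]) (use blocks sep that False in \<open>simp_all add: insert_commute\<close>)
  qed
  thus ?thesis unfolding cross_sign_cyc_cross[OF E abd(1,3,4)] cross_sign_cyc_cross[OF E abd(2,3,5)]
    using d_out by (simp add: cyc_cross_def)
qed

lemma F_coef_omega2:
  assumes D: "gd_wf (u @ v @ x)" and E: "gd_wf (u @ [p1,p2] @ v @ [q1,q2] @ x)"
    and a: "a \<notin> chords (u @ v @ x)" and b: "b \<notin> chords (u @ v @ x)" and ab: "a \<noteq> b"
    and sb: "sb = (\<not> sa)"
    and P: "{p1,p2} = {(a,t,sa),(b,t,sb)}" and Q: "{q1,q2} = {(a,\<not>t,sa),(b,\<not>t,sb)}"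
  shows "F_coef (u @ [p1,p2] @ v @ [q1,q2] @ x) C = F_coef (u @ v @ x) C"
proof -
  let ?D = "u @ v @ x" and ?E = "u @ [p1,p2] @ v @ [q1,q2] @ x"
  let ?m1 = "length u" and ?m2 = "length u + 2 + length v"
  let ?\<sigma> = "\<lambda>i. if i < length u then i else if i < length u + length v then i + 2 else i + 4"
  have mono: "strict_mono ?\<sigma>" by (auto simp: strict_mono_def)
  have "set ?E = set ?D \<union> {p1,p2} \<union> {q1,q2}" by auto
  hence setE: "set ?E = set ?D \<union> {(a,t,sa),(b,t,sb)} \<union> {(a,\<not>t,sa),(b,\<not>t,sb)}"
    unfolding P Q .
  have ch: "chords ?E = insert a (insert b (chords ?D))"
    unfolding chords_def setE by auto
  have ab_notin: "(a, t', s') \<notin> set ?D" "(b, t', s') \<notin> set ?D" for t' s'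
    using a b by (auto simp: chords_def)
  have w: "wr ?E c = wr ?D c" if "c \<in> chords ?D" for c
    using that a b unfolding wr_def setE by auto
  have wab: "wr ?E b = - wr ?E a"
    unfolding wr_def setE using ab_notin ab sb by (cases t; auto)
  have pos: "pos ?E y t' = ?\<sigma> (pos ?D y t')" if "y \<in> chords ?D" for y t'
    by (rule pos_transfer[OF D E that]) (auto simp: nth_append)
  have aE: "a \<in> chords ?E" and bE: "b \<in> chords ?E" using ch by auto
  have blocks: "{?E ! ?m1, ?E ! Suc ?m1} = {p1,p2}" "{?E ! ?m2, ?E ! Suc ?m2} = {q1,q2}"
    by (simp_all add: nth_append)
  have pos_t: "pos ?E a t \<in> {?m1, Suc ?m1}" "pos ?E b t \<in> {?m1, Suc ?m1}"
    using pos_in_block[OF E, of ?m1 a t sa] pos_in_block[OF E, of ?m1 b t sb] blocks P by auto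
  have pos_nt: "pos ?E a (\<not>t) \<in> {?m2, Suc ?m2}" "pos ?E b (\<not>t) \<in> {?m2, Suc ?m2}"
    using pos_in_block[OF E, of ?m2 a "\<not>t" sa] pos_in_block[OF E, of ?m2 b "\<not>t" sb] blocks Q by auto
  have X: "cross_sign ?E c d = cross_sign ?D c d" if "c \<in> chords ?D" "d \<in> chords ?D" for c d
    by (rule cross_sign_transfer_mono[OF D E that _ _ pos mono]) (use that ch in auto)
  have outside: "pos ?E d t' \<notin> {?m1, Suc ?m1, ?m2, Suc ?m2}" if "d \<in> chords ?D" for d t'
  proof -
    have dE: "d \<in> chords ?E" using that ch by auto
    have n: "pos ?E d t' \<noteq> pos ?E y tt" if "y \<in> {a,b}" for y tt
      using pos_inj[OF E dE, of y t' tt] that \<open>d \<in> chords ?D\<close> a b aE bE by auto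
    have "pos ?E a t \<noteq> pos ?E b t" "pos ?E a (\<not>t) \<noteq> pos ?E b (\<not>t)"
      using pos_inj[OF E aE bE] ab by auto
    hence "{?m1, Suc ?m1} = {pos ?E a t, pos ?E b t}" "{?m2, Suc ?m2} = {pos ?E a (\<not>t), pos ?E b (\<not>t)}"
      using pos_t pos_nt by auto
    thus ?thesis using n[of a] n[of b] by auto
  qed
  have parallel: "cross_sign ?E a d = cross_sign ?E b d" if "d \<in> chords ?D" for d
    using that a b ch pos_t pos_nt outside[OF that]
    by (intro cross_sign_eq_if_parallel[OF E aE bE, where m = ?m1 and n = ?m2 and t = t]) auto
  show ?thesis unfolding F_coef_eq_F_mat ch
    by (rule F_mat_insert_parallel_pair[OF finite_chords a b ab wab])
       (use w X cross_sign_skew[OF E] ch parallel in auto)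
qed

text \<open>The three adjacent pairs of omega 3 occupy blocks starting at 0, 2, 4; within the block l
holding the pair T (resp. M, B), the entry listed first in omega3_ok sits at slot l e1
(resp. e2, e3).\<close>
definition slot :: "nat \<Rightarrow> bool \<Rightarrow> nat" where
  "slot l e = (if e then l else Suc l)"

lemma omega3_ok_slots:
  assumes "omega3_ok (f 0, f 1) (f 2, f 3) (f 4, f 5)"
  obtains a b c sa sb sc e1 e2 e3 lT lM lB where
    "(lT,lM,lB) \<in> {(0,2,4),(0,4,2),(2,0,4),(2,4,0),(4,0,2),(4,2,0)}"
    "a \<noteq> b" "a \<noteq> c" "b \<noteq> c" "(e1 = e2) = (sb = sc)" "(e2 = e3) = (sa = sb)"
    "f (slot lT e1) = (a,True,sa)" "f (slot lT (\<not>e1)) = (b,True,sb)"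
    "f (slot lM e2) = (a,False,sa)" "f (slot lM (\<not>e2)) = (c,True,sc)"
    "f (slot lB e3) = (b,False,sb)" "f (slot lB (\<not>e3)) = (c,False,sc)"
proof -
  let ?blk = "\<lambda>l. (f l, f (Suc l))"
  obtain T M B a b c sa sb sc e1 e2 e3 where
    mem: "(T,M,B) \<in> {((f 0, f 1), (f 2, f 3), (f 4, f 5)), ((f 0, f 1), (f 4, f 5), (f 2, f 3)),
                      ((f 2, f 3), (f 0, f 1), (f 4, f 5)), ((f 2, f 3), (f 4, f 5), (f 0, f 1)),
                      ((f 4, f 5), (f 0, f 1), (f 2, f 3)), ((f 4, f 5), (f 2, f 3), (f 0, f 1))}"
    and ne: "a \<noteq> b" "a \<noteq> c" "b \<noteq> c"
    and T: "T = (if e1 then ((a,True,sa),(b,True,sb)) else ((b,True,sb),(a,True,sa)))"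
    and M: "M = (if e2 then ((a,False,sa),(c,True,sc)) else ((c,True,sc),(a,False,sa)))"
    and B: "B = (if e3 then ((b,False,sb),(c,False,sc)) else ((c,False,sc),(b,False,sb)))"
    and c12: "(e1 = e2) = (sb = sc)" "(e2 = e3) = (sa = sb)"
    using assms unfolding omega3_ok_def by (elim exE conjE) (rule that; assumption)
  have pick: "\<exists>lT lM lB. (lT,lM,lB) \<in> {(0,2,4),(0,4,2),(2,0,4),(2,4,0),(4,0,2),(4,2,0)}
                 \<and> T = g lT \<and> M = g lM \<and> B = g lB"
    if "(T,M,B) \<in> {(g 0, g 2, g 4), (g 0, g 4, g 2), (g 2, g 0, g 4),
                     (g 2, g 4, g 0), (g 4, g 0, g 2), (g 4, g 2, g 0)}" for g :: "nat \<Rightarrow> endpt \<times> endpt"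
    using that by (elim insertE emptyE; simp; blast)
  have "(T,M,B) \<in> {(?blk 0, ?blk 2, ?blk 4), (?blk 0, ?blk 4, ?blk 2), (?blk 2, ?blk 0, ?blk 4),
                     (?blk 2, ?blk 4, ?blk 0), (?blk 4, ?blk 0, ?blk 2), (?blk 4, ?blk 2, ?blk 0)}"
    using mem by simp
  then obtain lT lM lB where perm: "(lT,lM,lB) \<in> {(0,2,4),(0,4,2),(2,0,4),(2,4,0),(4,0,2),(4,2,0)}"
    and blocks: "T = ?blk lT" "M = ?blk lM" "B = ?blk lB"
    using pick by blast
  have place: "f (slot l e) = p" "f (slot l (\<not>e)) = q" if "?blk l = (if e then (p,q) else (q,p))" for l e p q
    using that by (cases e; simp add: slot_def)+
  show ?thesis
    by (rule that[OF perm ne c12 place[OF T[unfolded blocks(1)]] place[OF M[unfolded blocks(2)]]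
          place[OF B[unfolded blocks(3)]]])
qed

lemma omega3_local_conditions:
  fixes lT lM lB :: nat
  assumes perm: "(lT,lM,lB) \<in> {(0,2,4),(0,4,2),(2,0,4),(2,4,0),(4,0,2),(4,2,0)}"
    and c1: "(e1 = e2) = (sb = sc)" and c2: "(e2 = e3) = (sa = sb)"
  defines "xab \<equiv> cyc_cross (slot lT e1) (slot lM e2) (slot lT (\<not>e1)) (slot lB e3)"
    and "xac \<equiv> cyc_cross (slot lT e1) (slot lM e2) (slot lM (\<not>e2)) (slot lB (\<not>e3))"
    and "xbc \<equiv> cyc_cross (slot lT (\<not>e1)) (slot lB e3) (slot lM (\<not>e2)) (slot lB (\<not>e3))"
    and "yab \<equiv> cyc_cross (slot lT (\<not>e1)) (slot lM (\<not>e2)) (slot lT e1) (slot lB (\<not>e3))"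
    and "yac \<equiv> cyc_cross (slot lT (\<not>e1)) (slot lM (\<not>e2)) (slot lM e2) (slot lB e3)"
    and "ybc \<equiv> cyc_cross (slot lT e1) (slot lB (\<not>e3)) (slot lM e2) (slot lB e3)"
    and "wa \<equiv> if sa then 1 else -1 :: int" and "wb \<equiv> if sb then 1 else -1 :: int"
    and "wc \<equiv> if sc then 1 else -1 :: int"
  shows "xab * wb + xac * wc = yab * wb + yac * wc
    \<and> - xab * wa + xbc * wc = - yab * wa + ybc * wc
    \<and> - xac * wa - xbc * wb = - yac * wa - ybc * wb
    \<and> - xab * wa + xbc * wc = (xab * wb + xac * wc) + (- xac * wa - xbc * wb)
    \<and> (\<forall>\<sigma>\<in>{1,-1}. (if xab = \<sigma> then wb else 0) + (if xac = \<sigma> then wc else 0)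
                 = (if yab = \<sigma> then wb else 0) + (if yac = \<sigma> then wc else 0))
    \<and> (\<forall>\<sigma>\<in>{1,-1}. (if - xab = \<sigma> then wa else 0) + (if - xbc = \<sigma> then - wc else 0)
                 = (if - yab = \<sigma> then wa else 0) + (if - ybc = \<sigma> then - wc else 0))
    \<and> (\<forall>\<sigma>\<in>{1,-1}. (if - xac = \<sigma> then wa else 0) + (if - xbc = \<sigma> then wb else 0)
                 = (if - yac = \<sigma> then wa else 0) + (if - ybc = \<sigma> then wb else 0))"
proof -
  have sb: "sb = (if e2 = e3 then sa else \<not> sa)" using c2 by auto
  have sc: "sc = (if e1 = e2 then sb else \<not> sb)" using c1 by auto
  show ?thesis
    using perm unfolding assms(4-) sc sb cyc_cross_def slot_def cyc_between_def
    by (elim insertE emptyE; cases e1; cases e2; cases e3; cases sa; simp)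
qed

lemma slot_cases: "slot l e \<in> {l, Suc l}" "{slot l e, slot l (\<not>e)} = {l, Suc l}"
  by (auto simp: slot_def)

lemma cyc_between_skip:
  assumes "x \<notin> {r, Suc r}" "y \<notin> {r, Suc r}"
  shows "cyc_between x (Suc r) y = cyc_between x r y"
  using assms unfolding cyc_between_def by auto

locale swapped_blocks =
  fixes D E :: gdiag and \<sigma> :: "nat \<Rightarrow> nat" and lT lM lB a b c :: nat and sa sb sc e1 e2 e3 :: bool
  assumes D: "gd_wf D" and E: "gd_wf E" and set_eq: "set E = set D" and len: "length E = length D"
    and mono: "strict_mono \<sigma>" and adj: "\<And>l. l \<in> {0,2,4} \<Longrightarrow> \<sigma> (Suc l) = Suc (\<sigma> l)"
    and range: "\<sigma> 5 < length D"
    and swap: "\<And>l e. l \<in> {0,2,4} \<Longrightarrow> E ! \<sigma> (slot l e) = D ! \<sigma> (slot l (\<not>e))"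
    and same: "\<And>i. i < length D \<Longrightarrow> i \<notin> \<sigma> ` {..<6} \<Longrightarrow> E ! i = D ! i"
    and perm: "(lT,lM,lB) \<in> {(0,2,4),(0,4,2),(2,0,4),(2,4,0),(4,0,2),(4,2,0)}"
    and ne: "a \<noteq> b" "a \<noteq> c" "b \<noteq> c" and c1: "(e1 = e2) = (sb = sc)" and c2: "(e2 = e3) = (sa = sb)"
    and entries: "D ! \<sigma> (slot lT e1) = (a,True,sa)" "D ! \<sigma> (slot lT (\<not>e1)) = (b,True,sb)"
      "D ! \<sigma> (slot lM e2) = (a,False,sa)" "D ! \<sigma> (slot lM (\<not>e2)) = (c,True,sc)"
      "D ! \<sigma> (slot lB e3) = (b,False,sb)" "D ! \<sigma> (slot lB (\<not>e3)) = (c,False,sc)"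
begin

lemma block_starts: "lT \<in> {0,2,4}" "lM \<in> {0,2,4}" "lB \<in> {0,2,4}"
  using perm by auto

lemma slot_less_length:
  assumes "l \<in> {0,2,4}"
  shows "\<sigma> (slot l e) < length D"
proof -
  have "slot l e \<le> 5" using assms by (auto simp: slot_def)
  thus ?thesis using strict_mono_less_eq[OF mono] range by (meson le_less_trans)
qed

lemma pos_slot:
  assumes "l \<in> {0,2,4}" "D ! \<sigma> (slot l e) = (x,t,s)"
  shows "pos D x t = \<sigma> (slot l e)" "pos E x t = \<sigma> (slot l (\<not>e))"
  using pos_eqI[OF D] pos_eqI[OF E] slot_less_length[OF assms(1)] assms(2) swap[OF assms(1), of "\<not>e"] len
  by simp_all

lemmas pos_triangle =
  pos_slot[OF block_starts(1) entries(1)] pos_slot[OF block_starts(1) entries(2)]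
  pos_slot[OF block_starts(2) entries(3)] pos_slot[OF block_starts(2) entries(4)]
  pos_slot[OF block_starts(3) entries(5)] pos_slot[OF block_starts(3) entries(6)]

lemma tails_in_set: "(a,True,sa) \<in> set D" "(b,True,sb) \<in> set D" "(c,True,sc) \<in> set D"
  using nth_mem[OF slot_less_length[OF block_starts(1), of e1]]
    nth_mem[OF slot_less_length[OF block_starts(1), of "\<not>e1"]]
    nth_mem[OF slot_less_length[OF block_starts(2), of "\<not>e2"]] entries(1,2,4) by simp_all

lemma chords_eq: "chords E = chords D"
  by (simp add: chords_def set_eq)

lemma wr_eq: "wr E = wr D"
  by (simp add: wr_def set_eq fun_eq_iff)

lemma triangle_chords: "a \<in> chords D" "b \<in> chords D" "c \<in> chords D"
  using tails_in_set by (auto intro: chordsI)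

lemma pos_outside:
  assumes d: "d \<in> chords D - {a,b,c}"
  shows "pos D d t \<notin> \<sigma> ` {..<6}" "pos E d t = pos D d t"
proof -
  have "fst (D ! \<sigma> j) \<in> {a,b,c}" if "j < 6" for j
  proof -
    have "j \<in> {lT, Suc lT, lM, Suc lM, lB, Suc lB}" using perm that by auto
    hence "j \<in> {slot lT e1, slot lT (\<not>e1), slot lM e2, slot lM (\<not>e2), slot lB e3, slot lB (\<not>e3)}"
      using slot_cases(2) by blast
    thus ?thesis using entries by auto
  qed
  thus out: "pos D d t \<notin> \<sigma> ` {..<6}"
    using pos_nth(2)[OF D, of d t] d by force
  show "pos E d t = pos D d t"
    using pos_eqI[OF E] same[OF pos_nth(1)[OF D] out] pos_nth[OF D, of d t] d len by simp
qed

lemma cyc_between_outside_slot: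
  assumes d: "d \<in> chords D - {a,b,c}" and l: "l \<in> {0,2,4}"
  shows "cyc_between (pos D d True) (\<sigma> (slot l e)) (pos D d False)
       = cyc_between (pos D d True) (\<sigma> l) (pos D d False)"
proof (cases e)
  case False
  have "l < 6" "Suc l < 6" using l by auto
  hence "pos D d t \<notin> {\<sigma> l, Suc (\<sigma> l)}" for t
    using pos_outside(1)[OF d, of t] adj[OF l] by (metis image_eqI insert_iff lessThan_iff singletonD)
  thus ?thesis using False adj[OF l] by (simp add: slot_def cyc_between_skip)
qed (simp add: slot_def)

text \<open>A chord outside the triangle sees each of a, b, c only through the two blocks holding
its endpoints, which the move leaves in place.\<close>
lemma cross_sign_outside:
  assumes d: "d \<in> chords D - {a,b,c}"
  shows "cross_sign D d a = cyc_cross (pos D d True) (pos D d False) (\<sigma> lT) (\<sigma> lM)"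
    "cross_sign D d b = cyc_cross (pos D d True) (pos D d False) (\<sigma> lT) (\<sigma> lB)"
    "cross_sign D d c = cyc_cross (pos D d True) (pos D d False) (\<sigma> lM) (\<sigma> lB)"
    "cross_sign E d a = cross_sign D d a" "cross_sign E d b = cross_sign D d b"
    "cross_sign E d c = cross_sign D d c"
proof -
  have dD: "d \<in> chords D" and dE: "d \<in> chords E" and n: "d \<noteq> a" "d \<noteq> b" "d \<noteq> c"
    using d chords_eq by auto
  note abc = triangle_chords and abcE = triangle_chords[folded chords_eq]
  note skip = cyc_between_outside_slot[OF d block_starts(1)] cyc_between_outside_slot[OF d block_starts(2)]
    cyc_between_outside_slot[OF d block_starts(3)]
  show "cross_sign D d a = cyc_cross (pos D d True) (pos D d False) (\<sigma> lT) (\<sigma> lM)"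
    "cross_sign D d b = cyc_cross (pos D d True) (pos D d False) (\<sigma> lT) (\<sigma> lB)"
    "cross_sign D d c = cyc_cross (pos D d True) (pos D d False) (\<sigma> lM) (\<sigma> lB)"
    "cross_sign E d a = cross_sign D d a" "cross_sign E d b = cross_sign D d b"
    "cross_sign E d c = cross_sign D d c"
    unfolding cross_sign_cyc_cross[OF D dD abc(1) n(1)] cross_sign_cyc_cross[OF D dD abc(2) n(2)]
      cross_sign_cyc_cross[OF D dD abc(3) n(3)] cross_sign_cyc_cross[OF E dE abcE(1) n(1)]
      cross_sign_cyc_cross[OF E dE abcE(2) n(2)] cross_sign_cyc_cross[OF E dE abcE(3) n(3)]
      pos_triangle pos_outside(2)[OF d] cyc_cross_def skip by simp_all
qed

lemma cross_sign_eq_unless_triangle: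
  assumes de: "d \<in> chords D" "e \<in> chords D" and nt: "\<not> (d \<in> {a,b,c} \<and> e \<in> {a,b,c})"
  shows "cross_sign E d e = cross_sign D d e"
proof (cases "d = e")
  case False
  consider "d \<notin> {a,b,c}" "e \<notin> {a,b,c}" | "d \<notin> {a,b,c}" "e \<in> {a,b,c}" | "d \<in> {a,b,c}" "e \<notin> {a,b,c}"
    using nt by blast
  thus ?thesis
  proof cases
    case 1
    thus ?thesis using cross_sign_cyc_cross[OF D de False] cross_sign_cyc_cross[OF E de[folded chords_eq] False]
      pos_outside(2) de by simp
  next
    case 2
    hence d: "d \<in> chords D - {a,b,c}" using de by simp
    have "e = a \<or> e = b \<or> e = c" using 2 by simp
    thus ?thesis using cross_sign_outside(4-6)[OF d] by (elim disjE) simp_all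
  next
    case 3
    have "cross_sign E d e = - cross_sign E e d" "cross_sign D d e = - cross_sign D e d"
      using skew_onD[OF cross_sign_skew[OF E] de(2,1)[folded chords_eq]]
        skew_onD[OF cross_sign_skew[OF D] de(2,1)] by simp_all
    moreover have e: "e \<in> chords D - {a,b,c}" using 3 de by simp
    moreover have "d = a \<or> d = b \<or> d = c" using 3 by simp
    ultimately show ?thesis using cross_sign_outside(4-6)[OF e] by (elim disjE) simp_all
  qed
qed simp

lemma cross_sign_triangle:
  "cross_sign D a b = cyc_cross (slot lT e1) (slot lM e2) (slot lT (\<not>e1)) (slot lB e3)"
  "cross_sign D a c = cyc_cross (slot lT e1) (slot lM e2) (slot lM (\<not>e2)) (slot lB (\<not>e3))"
  "cross_sign D b c = cyc_cross (slot lT (\<not>e1)) (slot lB e3) (slot lM (\<not>e2)) (slot lB (\<not>e3))"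
  "cross_sign E a b = cyc_cross (slot lT (\<not>e1)) (slot lM (\<not>e2)) (slot lT e1) (slot lB (\<not>e3))"
  "cross_sign E a c = cyc_cross (slot lT (\<not>e1)) (slot lM (\<not>e2)) (slot lM e2) (slot lB e3)"
  "cross_sign E b c = cyc_cross (slot lT e1) (slot lB (\<not>e3)) (slot lM e2) (slot lB e3)"
  using triangle_chords triangle_chords[folded chords_eq] ne
  by (simp_all add: cross_sign_cyc_cross[OF D] cross_sign_cyc_cross[OF E] pos_triangle cyc_cross_mono[OF mono])

lemma F_coef_eq: "F_coef E C = F_coef D C"
proof -
  have wv: "wr D a = (if sa then 1 else -1)" "wr D b = (if sb then 1 else -1)" "wr D c = (if sc then 1 else -1)"
    using wr_eq_if_tail[OF D] tails_in_set by simp_all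
  have rel: "cross_sign D d b = cross_sign D d a + cross_sign D d c" if "d \<in> chords D - {a,b,c}" for d
    unfolding cross_sign_outside[OF that] cyc_cross_def by simp
  note local = omega3_local_conditions[OF perm c1 c2, folded cross_sign_triangle wv]
  interpret triangle_move "chords D" "wr D" "cross_sign D" "cross_sign E" a b c
    by (rule triangle_move.intro[OF finite_chords triangle_chords ne cross_sign_eq_unless_triangle
          cross_sign_skew[OF D] cross_sign_skew[OF E, unfolded chords_eq] cross_sign_range
          cross_sign_range rel]) (use local in blast)+
  show ?thesis unfolding F_coef_eq_F_mat chords_eq wr_eq by (rule F_mat_eq)
qed

end

lemma F_coef_omega3:
  assumes D: "gd_wf (u @ [x1,y1] @ v @ [x2,y2] @ w @ [x3,y3] @ z)"
    and E: "gd_wf (u @ [y1,x1] @ v @ [y2,x2] @ w @ [y3,x3] @ z)"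
    and ok: "omega3_ok (x1,y1) (x2,y2) (x3,y3)"
  shows "F_coef (u @ [y1,x1] @ v @ [y2,x2] @ w @ [y3,x3] @ z) C
       = F_coef (u @ [x1,y1] @ v @ [x2,y2] @ w @ [x3,y3] @ z) C"
proof -
  let ?D = "u @ [x1,y1] @ v @ [x2,y2] @ w @ [x3,y3] @ z"
  let ?E = "u @ [y1,x1] @ v @ [y2,x2] @ w @ [y3,x3] @ z"
  define \<sigma> where "\<sigma> j = (if j < 2 then length u + j else if j < 4 then length u + length v + j
                         else length u + length v + length w + j)" for j
  have mono: "strict_mono \<sigma>" unfolding strict_mono_def \<sigma>_def by auto
  have nD: "?D ! \<sigma> 0 = x1" "?D ! \<sigma> 1 = y1" "?D ! \<sigma> 2 = x2" "?D ! \<sigma> 3 = y2" "?D ! \<sigma> 4 = x3" "?D ! \<sigma> 5 = y3"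
    by (simp_all add: \<sigma>_def nth_append)
  have nE: "?E ! \<sigma> 0 = y1" "?E ! \<sigma> 1 = x1" "?E ! \<sigma> 2 = y2" "?E ! \<sigma> 3 = x2" "?E ! \<sigma> 4 = y3" "?E ! \<sigma> 5 = x3"
    by (simp_all add: \<sigma>_def nth_append)
  have swap: "?E ! \<sigma> (slot l e) = ?D ! \<sigma> (slot l (\<not>e))" if "l \<in> {0,2,4}" for l e
    using that nD nE by (cases e) (auto simp: slot_def eval_nat_numeral)
  have same: "?E ! i = ?D ! i" if "i \<notin> \<sigma> ` {..<6}" for i
  proof -
    have "i \<noteq> \<sigma> k" if "k < 6" for k using that \<open>i \<notin> _\<close> by auto
    hence "i \<notin> {\<sigma> 0, \<sigma> 1, \<sigma> 2, \<sigma> 3, \<sigma> 4, \<sigma> 5}" by simp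
    thus ?thesis by (auto simp: \<sigma>_def nth_append nth_Cons split: nat.split)
  qed
  have "omega3_ok (?D ! \<sigma> 0, ?D ! \<sigma> 1) (?D ! \<sigma> 2, ?D ! \<sigma> 3) (?D ! \<sigma> 4, ?D ! \<sigma> 5)"
    using ok unfolding nD .
  then obtain a b c sa sb sc e1 e2 e3 lT lM lB where
    perm: "(lT,lM,lB) \<in> {(0,2,4),(0,4,2),(2,0,4),(2,4,0),(4,0,2),(4,2,0)}"
    and ne: "a \<noteq> b" "a \<noteq> c" "b \<noteq> c" and c12: "(e1 = e2) = (sb = sc)" "(e2 = e3) = (sa = sb)"
    and entries: "?D ! \<sigma> (slot lT e1) = (a,True,sa)" "?D ! \<sigma> (slot lT (\<not>e1)) = (b,True,sb)"
      "?D ! \<sigma> (slot lM e2) = (a,False,sa)" "?D ! \<sigma> (slot lM (\<not>e2)) = (c,True,sc)"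
      "?D ! \<sigma> (slot lB e3) = (b,False,sb)" "?D ! \<sigma> (slot lB (\<not>e3)) = (c,False,sc)"
    by (rule omega3_ok_slots[where f = "\<lambda>j. ?D ! \<sigma> j"])
  interpret swapped_blocks ?D ?E \<sigma> lT lM lB a b c sa sb sc e1 e2 e3
  proof (rule swapped_blocks.intro[OF D E _ _ mono _ _ swap same perm ne c12 entries])
    show "set ?E = set ?D" by (simp add: insert_commute)
    show "length ?E = length ?D" by simp
    show "\<sigma> (Suc l) = Suc (\<sigma> l)" if "l \<in> {0,2,4}" for l using that by (auto simp: \<sigma>_def)
    show "\<sigma> 5 < length ?D" by (simp add: \<sigma>_def)
  qed
  show ?thesis by (rule F_coef_eq)
qed

lemma F_coef_gd_move:
  assumes "gd_move D E" "gd_wf D" "gd_wf E"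
  shows "F_coef E C = F_coef D C"
  using assms
proof (induction rule: gd_move.induct)
  case rot show ?case by (rule F_coef_rotate1[OF rot.prems])
next
  case ren show ?case by (rule F_coef_rename[OF ren.prems ren.hyps])
next
  case om1 show ?case by (rule F_coef_omega1[OF om1.prems om1.hyps])
next
  case om2 show ?case by (rule F_coef_omega2[OF om2.prems om2.hyps])
next
  case om3 show ?case by (rule F_coef_omega3[OF om3.prems om3.hyps])
qed

lemma F_coef_gd_equiv:
  assumes "gd_equiv D E"
  shows "F_coef E C = F_coef D C"
  using assms unfolding gd_equiv_def
proof (induction rule: rtranclp_induct)
  case (step y z)
  hence "F_coef z C = F_coef y C" using F_coef_gd_move[of y z C] F_coef_gd_move[of z y C] by auto
  thus ?case using step.IH by simp
qed simp

lemma sum_abs_class_weights_le_card: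
  fixes g :: "nat \<Rightarrow> 'b" and w :: "nat \<Rightarrow> int"
  assumes fA: "finite A" and fS: "finite S" and w: "\<And>c. \<bar>w c\<bar> = 1"
  shows "(\<Sum>C\<in>S. \<bar>\<Sum>c\<in>{c\<in>A. g c = C}. w c\<bar>) \<le> int (card A)"
proof -
  have "(\<Sum>C\<in>S. \<bar>\<Sum>c\<in>{c\<in>A. g c = C}. w c\<bar>) \<le> (\<Sum>C\<in>S. \<Sum>c\<in>{c\<in>A. g c = C}. \<bar>w c\<bar>)"
    by (intro sum_mono sum_abs)
  also have "\<dots> = (\<Sum>C\<in>S. \<Sum>c\<in>A. if g c = C then 1 else 0)"
    by (simp only: sum.inter_filter[OF fA] w)
  also have "\<dots> = (\<Sum>c\<in>A. \<Sum>C\<in>S. if g c = C then 1 else 0)"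
    by (rule sum.swap)
  also have "\<dots> = (\<Sum>c\<in>A. if g c \<in> S then 1 else 0)"
    using fS by (simp add: sum.delta)
  also have "\<dots> \<le> (\<Sum>c\<in>A. 1)" by (intro sum_mono) simp
  finally show ?thesis by simp
qed

theorem proposition5p3:
  assumes "gd_wf D"
  shows "(\<Sum>C\<in>F_classes D - {lcls lzero}. \<bar>F_coef D C\<bar>) \<le> int (real_crossing_number (virtual_knot D))"
proof -
  let ?K = "virtual_knot D" and ?S = "F_classes D - {lcls lzero}"
  have "D \<in> ?K" using assms by (simp add: virtual_knot_def gd_equiv_def)
  then obtain E where E: "E \<in> ?K" "card (chords E) = real_crossing_number ?K"
    using LeastI_ex[of "\<lambda>n. \<exists>E\<in>?K. card (chords E) = n"] unfolding real_crossing_number_def by blast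
  have F_eq: "F_coef D C = F_coef E C" for C
    using E(1) F_coef_gd_equiv[of D E C] by (simp add: virtual_knot_def)
  have "finite ?S" unfolding F_classes_def using finite_chords by simp
  hence "(\<Sum>C\<in>?S. \<bar>\<Sum>c\<in>{c\<in>chords E. lcls (gpoly E c) = C}. wr E c\<bar>) \<le> int (card (chords E))"
    by (rule sum_abs_class_weights_le_card[OF finite_chords]) (simp add: wr_def)
  moreover have "(\<Sum>C\<in>?S. \<bar>F_coef D C\<bar>) = (\<Sum>C\<in>?S. \<bar>\<Sum>c\<in>{c\<in>chords E. lcls (gpoly E c) = C}. wr E c\<bar>)"
    unfolding F_eq by (intro sum.cong) (auto simp: F_coef_def)
  ultimately show ?thesis using E(2) by simp
qed

end
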